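(* Let $K$ be a compact convex polytope of dimension $d$ in $\mathbb{R}^d$ with $N$ faces. Then $K$ is a finite intersection $$K=\bigcap_{j=1}^M S_j,$$ where each $S_j$ is either a $d$-dimensional simplex or a strip whose orthogonal cross-section is a lower-dimensional simplex. Moreover, each (codimension-one) face of each $S_j$ contains a face of $K$.
   Context: Faces of $K$ mean faces of codimension $1$. A strip in $\mathbb{R}^d$ is a set $L^{-1}(A)$, where $L\colon\mathbb{R}^d\to\mathbb{R}^j$ is a linear map of rank $j$, $j\in\{1,\dots,d\}$, and $A\subset\mathbb{R}^j$ is a compact convex set of dimension $j$. After an orthogonal change of coordinates the strip is $A\times\mathbb{R}^{d-j}$, and $A$ is its ($j$-dimensional) orthogonal cross-section. "Lower-dimensional" means $j<d$. When $A$ is a simplex, the faces of the strip are the sets $L^{-1}(G)$ with $G$ a facet of $A$. *)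

theory Defs
  imports "HOL-Analysis.Analysis"
begin

text \<open>A lower-dimensional simplicial strip in the Euclidean space 'a, presented by data (L, j, A):
  L is a linear map of rank j (0 < j < DIM('a)); its range, a j-dimensional subspace of 'a,
  plays the role of R^j; A is a j-dimensional simplex inside that range; the strip is the
  preimage of A under L.\<close>
definition simplex_strip_data :: "('a::euclidean_space \<Rightarrow> 'a) \<Rightarrow> nat \<Rightarrow> 'a set \<Rightarrow> bool" where
  "simplex_strip_data L j A \<longleftrightarrow>
     linear L \<and> dim (range L) = j \<and> 1 \<le> j \<and> j < DIM('a) \<and>
     A \<subseteq> range L \<and> (int j) simplex A"

definition strip_faces :: "('a::euclidean_space \<Rightarrow> 'a) \<Rightarrow> 'a set \<Rightarrow> 'a set set" where
  "strip_faces L A = {L -` G | G. G facet_of A}"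

end

theory Submission
  imports Defs
begin

text \<open>
  Write K as the irredundant intersection of halfspaces a_h . x <= b_h (h in F), so that every
  hyperplane a_h . x = b_h meets K in a facet, and fix h0 in F. Since K is bounded, -a_h0 lies in
  the convex cone spanned by the normals, and by Caratheodory's theorem for cones there is a
  relation mu_h0 a_h0 + sum_(h in T) mu_h a_h = 0 with all mu_h > 0 and the a_h (h in T) linearly
  independent. The halfspaces indexed by J = {h0} u T cut out a set S that contains K and lies in
  the h0-th halfspace. Because sum_(h in J) mu_h (b_h - a_h . y) is a positive constant, the
  normalised weighted slacks are barycentric coordinates on V = span {a_h | h in T}, so S meets V
  in a simplex whose vertices are the points of V where all constraints of J but one are tight.
  S is the preimage of this simplex under the orthogonal projection onto V: a d-simplex if T has
  d elements and a strip otherwise. Each face of S contains the part of S on a hyperplane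
  a_h . x = b_h with h in J, which contains a facet of K. Intersecting these sets S over all h0
  gives K.
\<close>

section \<open>Linear algebra in Euclidean space\<close>

lemma span_inner_interpolation:
  fixes B :: "'a::euclidean_space set"
  assumes "independent B"
  obtains v where "v \<in> span B" "\<And>n. n \<in> B \<Longrightarrow> n \<bullet> v = t n"
proof -
  obtain g :: "'a \<Rightarrow> real" where g: "linear g" "\<And>x. x \<in> B \<Longrightarrow> g x = t x"
    using linear_independent_extend[OF assms] by metis
  have gw: "g x = x \<bullet> adjoint g 1" for x
    using adjoint_works[OF g(1), of x 1] by simp
  obtain y z where y: "y \<in> span B" and z: "\<And>u. u \<in> span B \<Longrightarrow> orthogonal z u"
    and yz: "adjoint g 1 = y + z"
    using orthogonal_subspace_decomp_exists by blast
  have "n \<bullet> y = t n" if "n \<in> B" for n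
  proof -
    have "n \<bullet> z = 0"
      using z[OF span_base[OF that]] by (simp add: orthogonal_def inner_commute)
    then show ?thesis using yz gw[of n] g(2)[OF that] by (simp add: inner_add_right)
  qed
  with y that show thesis by blast
qed

lemma orthogonal_projection_exists:
  fixes V :: "'a::euclidean_space set"
  assumes "subspace V"
  obtains L where "linear L" "range L = V" "\<And>x y. y \<in> V \<Longrightarrow> y \<bullet> L x = y \<bullet> x"
proof -
  obtain E where E: "pairwise orthogonal E" "\<And>e. e \<in> E \<Longrightarrow> norm e = 1"
    "independent E" "span E = V"
    using orthonormal_basis_subspace[OF assms] by metis
  have finE: "finite E" using E(3) independent_bound by blast
  define L where "L x = (\<Sum>e\<in>E. (e \<bullet> x) *\<^sub>R e)" for x
  have lin: "linear L"
    unfolding L_def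
    by (auto simp: linear_iff inner_add_right scaleR_add_left sum.distrib scaleR_sum_right)
  have LV: "L x \<in> V" for x
    unfolding L_def E(4)[symmetric] by (intro span_sum span_scale) (auto intro: span_base)
  have eL: "e \<bullet> L x = e \<bullet> x" if "e \<in> E" for e x
  proof -
    have "e \<bullet> L x = (\<Sum>e'\<in>E. (e' \<bullet> x) * (e \<bullet> e'))"
      unfolding L_def by (simp add: inner_sum_right)
    also have "\<dots> = (e \<bullet> x) * (e \<bullet> e) + (\<Sum>e'\<in>E - {e}. (e' \<bullet> x) * (e \<bullet> e'))"
      by (rule sum.remove[OF finE that])
    also have "(\<Sum>e'\<in>E - {e}. (e' \<bullet> x) * (e \<bullet> e')) = 0"
      using E(1) that by (intro sum.neutral) (auto simp: pairwise_def orthogonal_def)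
    finally show ?thesis using E(2)[OF that] by (simp add: norm_eq_1)
  qed
  have yL: "y \<bullet> L x = y \<bullet> x" if "y \<in> V" for x y
  proof -
    have "orthogonal (x - L x) y"
      by (rule orthogonal_to_span[of y E])
        (use that E(4) eL in
          \<open>auto simp: orthogonal_def inner_diff_left inner_diff_right inner_commute\<close>)
    then show ?thesis by (simp add: orthogonal_def inner_diff_left inner_diff_right inner_commute)
  qed
  have "L y = y" if "y \<in> V" for y
  proof -
    have "(y - L y) \<bullet> (y - L y) = 0"
      using yL[OF subspace_diff[OF assms that LV], of y] by (simp add: inner_diff_right)
    then show ?thesis by simp
  qed
  then have "range L = V" using LV by (metis image_subset_iff rangeI subsetI subset_antisym)
  with lin yL that show thesis by blast
qed

section \<open>Conic Caratheodory theorem\<close>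

lemma convex_cone_hull_image_nonneg_sum:
  fixes v :: "'i \<Rightarrow> 'a::real_vector"
  assumes "finite I" "z \<in> convex_cone hull (v ` I)"
  obtains l where "\<forall>i\<in>I. 0 \<le> l i" "z = (\<Sum>i\<in>I. l i *\<^sub>R v i)"
proof -
  define comb where "comb l = (\<Sum>i\<in>I. l i *\<^sub>R v i)" for l
  define C where "C = comb ` {l. \<forall>i\<in>I. 0 \<le> l i}"
  have "v j \<in> C" if "j \<in> I" for j
  proof -
    have "v j = comb (\<lambda>i. if i = j then 1 else 0)"
      unfolding comb_def using assms(1) that
      by (simp add: if_distrib[of "\<lambda>r. r *\<^sub>R _"] cong: if_cong)
    then show ?thesis unfolding C_def by auto
  qed
  moreover have "convex_cone C"
    unfolding convex_cone_iff
  proof (intro conjI ballI allI impI)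
    have "0 = comb (\<lambda>_. 0)" by (simp add: comb_def)
    then show "0 \<in> C" unfolding C_def by auto
    show "x + y \<in> C" if x: "x \<in> C" and y: "y \<in> C" for x y
    proof -
      obtain l l' where "\<forall>i\<in>I. 0 \<le> l i" "\<forall>i\<in>I. 0 \<le> l' i" "x = comb l" "y = comb l'"
        using x y unfolding C_def by blast
      moreover have "comb l + comb l' = comb (\<lambda>i. l i + l' i)"
        by (simp add: comb_def scaleR_add_left sum.distrib)
      ultimately show ?thesis unfolding C_def by auto
    qed
    show "c *\<^sub>R x \<in> C" if x: "x \<in> C" and c: "0 \<le> c" for x c
    proof -
      obtain l where "\<forall>i\<in>I. 0 \<le> l i" "x = comb l"
        using x unfolding C_def by blast
      moreover have "c *\<^sub>R comb l = comb (\<lambda>i. c * l i)"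
        by (simp add: comb_def scaleR_sum_right)
      ultimately show ?thesis unfolding C_def using c by auto
    qed
  qed
  ultimately have "convex_cone hull (v ` I) \<subseteq> C"
    by (intro hull_minimal) auto
  with assms(2) obtain l where "\<forall>i\<in>I. 0 \<le> l i" "z = comb l"
    unfolding C_def by blast
  with that show thesis unfolding comb_def by blast
qed

lemma nontrivial_relation_if_not_independent_family:
  fixes v :: "'i \<Rightarrow> 'a::real_vector"
  assumes "finite I" "\<not> (inj_on v I \<and> independent (v ` I))"
  obtains u where "\<exists>i\<in>I. u i \<noteq> 0" "(\<Sum>i\<in>I. u i *\<^sub>R v i) = 0"
proof (cases "inj_on v I")
  case True
  then have "dependent (v ` I)" using assms(2) by blast
  then obtain U where "\<exists>w\<in>v ` I. U w \<noteq> 0" "(\<Sum>w\<in>v ` I. U w *\<^sub>R w) = 0"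
    using dependent_finite[of "v ` I"] assms(1) by auto
  then show thesis
    using that[of "U \<circ> v"] sum.reindex[OF True, of "\<lambda>w. U w *\<^sub>R w"] by auto
next
  case False
  then obtain i j where ij: "i \<in> I" "j \<in> I" "i \<noteq> j" "v i = v j"
    unfolding inj_on_def by blast
  define u :: "'i \<Rightarrow> real" where "u k = (if k = i then 1 else if k = j then -1 else 0)" for k
  have "u k *\<^sub>R v k = (if k = i then v i else 0) - (if k = j then v j else 0)" for k
    using ij(3) by (simp add: u_def)
  then have "(\<Sum>k\<in>I. u k *\<^sub>R v k) = 0"
    using assms(1) ij by (simp add: sum_subtractf)
  moreover have "u i \<noteq> 0" by (simp add: u_def)
  ultimately show thesis using that ij(1) by blast
qed

lemma nonneg_combination_drop_term:
  fixes v :: "'i \<Rightarrow> 'a::real_vector"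
  assumes "finite I" "\<forall>i\<in>I. 0 \<le> l i"
    and "\<exists>i\<in>I. u i \<noteq> 0" "(\<Sum>i\<in>I. u i *\<^sub>R v i) = 0"
  obtains i0 l' where "i0 \<in> I" "\<forall>i\<in>I. 0 \<le> l' i"
    "(\<Sum>i\<in>I - {i0}. l' i *\<^sub>R v i) = (\<Sum>i\<in>I. l i *\<^sub>R v i)"
proof -
  obtain w where w_pos: "\<exists>i\<in>I. 0 < w i" and w_sum: "(\<Sum>i\<in>I. w i *\<^sub>R v i) = 0"
  proof (cases "\<exists>i\<in>I. 0 < u i")
    case True
    then show thesis using assms(4) by (rule that)
  next
    case False
    with assms(3) have "\<exists>i\<in>I. 0 < - u i" by force
    moreover have "(\<Sum>i\<in>I. (- u i) *\<^sub>R v i) = 0" using assms(4) by (simp add: sum_negf)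
    ultimately show thesis by (rule that)
  qed
  define P where "P = {i\<in>I. 0 < w i}"
  have "finite P" "P \<noteq> {}" using assms(1) w_pos unfolding P_def by auto
  define t where "t = Min ((\<lambda>i. l i / w i) ` P)"
  have "t \<in> (\<lambda>i. l i / w i) ` P"
    unfolding t_def using \<open>finite P\<close> \<open>P \<noteq> {}\<close> by (intro Min_in) auto
  then obtain i0 where i0: "i0 \<in> P" "t = l i0 / w i0" by blast
  have t_le: "t \<le> l i / w i" if "i \<in> P" for i
    unfolding t_def using \<open>finite P\<close> that by auto
  have "0 \<le> t" using i0 assms(2) unfolding P_def by auto
  define l' where "l' i = l i - t * w i" for i
  have l'_nonneg: "0 \<le> l' i" if "i \<in> I" for i
  proof (cases "i \<in> P")
    case True
    then show ?thesis using t_le[OF True] unfolding l'_def P_def by (simp add: field_simps)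
  next
    case False
    then have "t * w i \<le> 0" using that \<open>0 \<le> t\<close> unfolding P_def by (simp add: mult_nonneg_nonpos)
    moreover have "0 \<le> l i" using assms(2) that by blast
    ultimately show ?thesis unfolding l'_def by linarith
  qed
  have "l' i0 = 0" using i0 unfolding l'_def P_def by auto
  then have "(\<Sum>i\<in>I - {i0}. l' i *\<^sub>R v i) = (\<Sum>i\<in>I. l' i *\<^sub>R v i)"
    using sum.remove[OF assms(1), of i0 "\<lambda>i. l' i *\<^sub>R v i"] i0(1) unfolding P_def by simp
  also have "\<dots> = (\<Sum>i\<in>I. l i *\<^sub>R v i) - t *\<^sub>R (\<Sum>i\<in>I. w i *\<^sub>R v i)"
    unfolding l'_def by (simp add: scaleR_diff_left sum_subtractf scaleR_sum_right)
  finally show thesis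
    using that[of i0 l'] i0(1) l'_nonneg w_sum unfolding P_def by simp
qed

lemma conic_caratheodory:
  fixes v :: "'i \<Rightarrow> 'a::real_vector"
  assumes "finite I" "\<forall>i\<in>I. 0 \<le> l i"
  shows "\<exists>I' m. I' \<subseteq> I \<and> inj_on v I' \<and> independent (v ` I') \<and> (\<forall>i\<in>I'. 0 < m i) \<and>
           (\<Sum>i\<in>I'. m i *\<^sub>R v i) = (\<Sum>i\<in>I. l i *\<^sub>R v i)"
  using assms
proof (induction "card I" arbitrary: I l rule: less_induct)
  case less
  show ?case
  proof (cases "inj_on v I \<and> independent (v ` I)")
    case True
    define I' where "I' = {i\<in>I. 0 < l i}"
    have "(\<Sum>i\<in>I'. l i *\<^sub>R v i) = (\<Sum>i\<in>I. l i *\<^sub>R v i)"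
      unfolding I'_def using less.prems by (intro sum.mono_neutral_left) (auto simp: less_le)
    moreover have "I' \<subseteq> I" unfolding I'_def by blast
    then have "inj_on v I'" "independent (v ` I')"
      using True inj_on_subset independent_mono[of "v ` I" "v ` I'"] by auto
    ultimately show ?thesis
      by (intro exI[of _ I'] exI[of _ l]) (auto simp: I'_def)
  next
    case False
    obtain u where u: "\<exists>i\<in>I. u i \<noteq> 0" "(\<Sum>i\<in>I. u i *\<^sub>R v i) = 0"
      using less.prems(1) False by (rule nontrivial_relation_if_not_independent_family)
    obtain i0 l' where i0: "i0 \<in> I" and l'_nonneg: "\<forall>i\<in>I. 0 \<le> l' i"
      and l': "(\<Sum>i\<in>I - {i0}. l' i *\<^sub>R v i) = (\<Sum>i\<in>I. l i *\<^sub>R v i)"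
      using less.prems u by (rule nonneg_combination_drop_term)
    have "\<exists>I' m. I' \<subseteq> I - {i0} \<and> inj_on v I' \<and> independent (v ` I') \<and> (\<forall>i\<in>I'. 0 < m i) \<and>
           (\<Sum>i\<in>I'. m i *\<^sub>R v i) = (\<Sum>i\<in>I - {i0}. l' i *\<^sub>R v i)"
      by (rule less.hyps[OF card_Diff1_less[OF less.prems(1) i0]])
        (use less.prems(1) l'_nonneg in auto)
    then obtain I' m where "I' \<subseteq> I - {i0}" "inj_on v I'" "independent (v ` I')" "\<forall>i\<in>I'. 0 < m i"
      "(\<Sum>i\<in>I'. m i *\<^sub>R v i) = (\<Sum>i\<in>I - {i0}. l' i *\<^sub>R v i)"
      by blast
    then show ?thesis
      using l' by (intro exI[of _ I'] exI[of _ m]) auto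
  qed
qed

section \<open>Circuits of linear inequalities\<close>

definition simplex_or_strip_over :: "'a::euclidean_space set set \<Rightarrow> 'a set \<Rightarrow> bool" where
  "simplex_or_strip_over \<G> S \<longleftrightarrow>
     (int DIM('a) simplex S \<and> (\<forall>F. F facet_of S \<longrightarrow> (\<exists>G\<in>\<G>. G \<subseteq> F)))
   \<or> (\<exists>L j A. simplex_strip_data L j A \<and> S = L -` A \<and> (\<forall>F\<in>strip_faces L A. \<exists>G\<in>\<G>. G \<subseteq> F))"

lemma simplex_or_strip_over_mono:
  assumes "simplex_or_strip_over \<G> S" "\<And>G. G \<in> \<G> \<Longrightarrow> \<exists>G'\<in>\<G>'. G' \<subseteq> G"
  shows "simplex_or_strip_over \<G>' S"
proof -
  have refine: "\<exists>G'\<in>\<G>'. G' \<subseteq> F" if covered: "\<exists>G\<in>\<G>. G \<subseteq> F" for F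
  proof -
    obtain G where "G \<in> \<G>" "G \<subseteq> F" using covered by blast
    moreover obtain G' where "G' \<in> \<G>'" "G' \<subseteq> G" using assms(2) \<open>G \<in> \<G>\<close> by blast
    ultimately show ?thesis by blast
  qed
  from assms(1) consider
      "int DIM('a) simplex S" "\<forall>F. F facet_of S \<longrightarrow> (\<exists>G\<in>\<G>. G \<subseteq> F)"
    | L j A where "simplex_strip_data L j A" "S = L -` A" "\<forall>F\<in>strip_faces L A. \<exists>G\<in>\<G>. G \<subseteq> F"
    unfolding simplex_or_strip_over_def by blast
  then show ?thesis
  proof cases
    case 1
    then show ?thesis unfolding simplex_or_strip_over_def using refine by (intro disjI1) blast
  next
    case 2
    then show ?thesis unfolding simplex_or_strip_over_def using refine by (intro disjI2) blast
  qed
qed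

locale positive_circuit =
  fixes a :: "'i \<Rightarrow> 'a::euclidean_space" and J :: "'i set" and h0 :: 'i and \<mu> :: "'i \<Rightarrow> real"
  assumes finite_J: "finite J" and h0_in_J: "h0 \<in> J"
    and mu_pos: "\<And>h. h \<in> J \<Longrightarrow> 0 < \<mu> h"
    and mu_sum: "(\<Sum>h\<in>J. \<mu> h *\<^sub>R a h) = 0"
    and inj_on_a: "inj_on a (J - {h0})"
    and independent_a: "independent (a ` (J - {h0}))"
    and a_h0_nonzero: "a h0 \<noteq> 0"
begin

definition normal_span :: "'a set" where
  "normal_span = span (a ` (J - {h0}))"

lemma scaled_a_h0_eq: "\<mu> h0 *\<^sub>R a h0 = - (\<Sum>h\<in>J - {h0}. \<mu> h *\<^sub>R a h)"
  using mu_sum sum.remove[OF finite_J h0_in_J, of "\<lambda>h. \<mu> h *\<^sub>R a h"]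
  by (simp add: eq_neg_iff_add_eq_0)

lemma a_in_normal_span:
  assumes "h \<in> J"
  shows "a h \<in> normal_span"
proof (cases "h = h0")
  case True
  have "\<mu> h0 *\<^sub>R a h0 \<in> normal_span"
    unfolding scaled_a_h0_eq normal_span_def by (intro span_neg span_sum span_scale span_base) auto
  then have "inverse (\<mu> h0) *\<^sub>R \<mu> h0 *\<^sub>R a h0 \<in> normal_span"
    unfolding normal_span_def by (rule span_scale)
  then show ?thesis using True mu_pos[OF h0_in_J] by simp
next
  case False
  then show ?thesis using assms unfolding normal_span_def by (auto intro: span_base)
qed

lemma card_J_ge_2: "2 \<le> card J"
proof -
  have "J - {h0} \<noteq> {}"
  proof
    assume "J - {h0} = {}"
    then have "\<mu> h0 *\<^sub>R a h0 = 0" by (simp only: scaled_a_h0_eq sum.empty minus_zero)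
    then show False using mu_pos[OF h0_in_J] a_h0_nonzero by simp
  qed
  then have "0 < card (J - {h0})"
    using finite_J card_gt_0_iff by blast
  then show ?thesis using card_Diff_singleton[OF h0_in_J] by simp
qed

lemma dim_normal_span: "dim normal_span = card J - 1"
proof -
  have "card (a ` (J - {h0})) = card J - 1"
    using card_image[OF inj_on_a] card_Diff_singleton[OF h0_in_J] by simp
  then show ?thesis
    unfolding normal_span_def using dim_span_eq_card_independent[OF independent_a] by simp
qed

end

locale circuit_polyhedron = positive_circuit a J h0 \<mu>
  for a :: "'i \<Rightarrow> 'a::euclidean_space" and J h0 \<mu> +
  fixes b :: "'i \<Rightarrow> real" and x0 :: 'a
  assumes strictly_feasible: "\<And>h. h \<in> J \<Longrightarrow> a h \<bullet> x0 < b h"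
begin

definition feasible_set :: "'a set" where
  "feasible_set = {x. \<forall>h\<in>J. a h \<bullet> x \<le> b h}"

definition cross_section :: "'a set" where
  "cross_section = normal_span \<inter> feasible_set"

definition total_slack :: real where
  "total_slack = (\<Sum>h\<in>J. \<mu> h * b h)"

lemma weighted_slack_sum: "(\<Sum>h\<in>J. \<mu> h * (b h - a h \<bullet> y)) = total_slack"
proof -
  have "(\<Sum>h\<in>J. \<mu> h * (a h \<bullet> y)) = (\<Sum>h\<in>J. \<mu> h *\<^sub>R a h) \<bullet> y"
    by (simp add: inner_sum_left)
  then show ?thesis
    unfolding total_slack_def using mu_sum by (simp add: right_diff_distrib sum_subtractf)
qed

lemma total_slack_pos: "0 < total_slack"
proof -
  have "0 < (\<Sum>h\<in>J. \<mu> h * (b h - a h \<bullet> x0))"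
    using finite_J h0_in_J mu_pos strictly_feasible by (intro sum_pos) auto
  then show ?thesis using weighted_slack_sum by simp
qed

lemma vertex_exists:
  assumes "l \<in> J"
  shows "\<exists>v\<in>normal_span. \<forall>k\<in>J. b k - a k \<bullet> v = (if k = l then total_slack / \<mu> l else 0)"
proof -
  define t where "t n = (let k = inv_into (J - {h0}) a n in
    b k - (if k = l then total_slack / \<mu> l else 0))" for n
  obtain v where v: "v \<in> normal_span" and vt: "\<And>n. n \<in> a ` (J - {h0}) \<Longrightarrow> n \<bullet> v = t n"
    using span_inner_interpolation[OF independent_a, of t] unfolding normal_span_def by blast
  have tight: "b k - a k \<bullet> v = (if k = l then total_slack / \<mu> l else 0)" if k: "k \<in> J - {h0}" for k
    using vt[of "a k"] k inv_into_f_f[OF inj_on_a k] unfolding t_def by simp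
  have "\<mu> h0 * (b h0 - a h0 \<bullet> v) + (\<Sum>k\<in>J - {h0}. \<mu> k * (b k - a k \<bullet> v)) = total_slack"
    using weighted_slack_sum[of v] sum.remove[OF finite_J h0_in_J, of "\<lambda>k. \<mu> k * (b k - a k \<bullet> v)"]
    by simp
  moreover have "(\<Sum>k\<in>J - {h0}. \<mu> k * (b k - a k \<bullet> v)) =
      (\<Sum>k\<in>J - {h0}. if k = l then total_slack else 0)"
    using tight mu_pos[OF assms] by (intro sum.cong) auto
  moreover have "(\<Sum>k\<in>J - {h0}. if k = l then total_slack else 0) =
      (if l = h0 then 0 else total_slack)"
    using finite_J assms by simp
  ultimately have "\<mu> h0 * (b h0 - a h0 \<bullet> v) = (if l = h0 then total_slack else 0)"
    by (auto split: if_splits)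
  then have "b h0 - a h0 \<bullet> v = (if h0 = l then total_slack / \<mu> l else 0)"
    using mu_pos[OF h0_in_J] by (auto simp: field_simps)
  then have "\<forall>k\<in>J. b k - a k \<bullet> v = (if k = l then total_slack / \<mu> l else 0)"
    using tight by (metis DiffI singletonD)
  with v show ?thesis by blast
qed

text \<open>The slack of vertex l at l is forced by weighted_slack_sum.\<close>

definition vertex :: "'i \<Rightarrow> 'a" where
  "vertex l = (SOME v. v \<in> normal_span \<and>
     (\<forall>k\<in>J. b k - a k \<bullet> v = (if k = l then total_slack / \<mu> l else 0)))"

lemma
  assumes "l \<in> J"
  shows vertex_in_normal_span: "vertex l \<in> normal_span"
    and slack_vertex: "k \<in> J \<Longrightarrow> b k - a k \<bullet> vertex l = (if k = l then total_slack / \<mu> l else 0)"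
  using someI_ex[OF vertex_exists[OF assms, unfolded Bex_def]] unfolding vertex_def by auto

lemma vertex_in_feasible_set:
  assumes "l \<in> J"
  shows "vertex l \<in> feasible_set"
proof -
  have "0 \<le> b k - a k \<bullet> vertex l" if "k \<in> J" for k
    using slack_vertex[OF assms that] mu_pos[OF assms] total_slack_pos by simp
  then show ?thesis unfolding feasible_set_def by simp
qed

lemma inj_on_vertex: "inj_on vertex J"
proof (rule inj_onI)
  fix l l' assume l: "l \<in> J" and l': "l' \<in> J" and eq: "vertex l = vertex l'"
  have "total_slack / \<mu> l = (if l = l' then total_slack / \<mu> l' else 0)"
    using slack_vertex[OF l l] slack_vertex[OF l' l] eq by simp
  then show "l = l'" using total_slack_pos mu_pos[OF l] by (auto split: if_splits)
qed

definition weight :: "'a \<Rightarrow> 'i \<Rightarrow> real" where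
  "weight y l = \<mu> l * (b l - a l \<bullet> y) / total_slack"

lemma sum_weight: "(\<Sum>l\<in>J. weight y l) = 1"
  unfolding weight_def using weighted_slack_sum[of y] total_slack_pos
  by (simp add: sum_divide_distrib[symmetric])

lemma weight_nonneg:
  assumes "y \<in> feasible_set" "l \<in> J"
  shows "0 \<le> weight y l"
proof -
  have "0 \<le> b l - a l \<bullet> y" using assms unfolding feasible_set_def by simp
  then show ?thesis
    unfolding weight_def using mu_pos[OF assms(2)] total_slack_pos by simp
qed

lemma normal_span_eqI:
  assumes "y \<in> normal_span" "z \<in> normal_span" "\<And>h. h \<in> J \<Longrightarrow> a h \<bullet> y = a h \<bullet> z"
  shows "y = z"
proof -
  have "orthogonal (y - z) (y - z)"
    by (rule orthogonal_to_span[of "y - z" "a ` (J - {h0})"])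
      (use assms in \<open>auto simp: normal_span_def span_diff orthogonal_def
        inner_diff_left inner_diff_right inner_commute\<close>)
  then show ?thesis by (simp add: orthogonal_self)
qed

lemma barycentric_representation:
  assumes "y \<in> normal_span"
  shows "y = (\<Sum>l\<in>J. weight y l *\<^sub>R vertex l)"
proof (rule normal_span_eqI[OF assms])
  show "(\<Sum>l\<in>J. weight y l *\<^sub>R vertex l) \<in> normal_span"
    using vertex_in_normal_span unfolding normal_span_def by (intro span_sum span_scale) auto
  fix k assume k: "k \<in> J"
  have "a k \<bullet> (\<Sum>l\<in>J. weight y l *\<^sub>R vertex l) =
      (\<Sum>l\<in>J. weight y l * b k - (if l = k then weight y l * (total_slack / \<mu> l) else 0))"
    unfolding inner_sum_right inner_scaleR_right
  proof (rule sum.cong[OF refl])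
    fix l assume l: "l \<in> J"
    have "a k \<bullet> vertex l = b k - (if k = l then total_slack / \<mu> l else 0)"
      using slack_vertex[OF l k] by linarith
    then show "weight y l * (a k \<bullet> vertex l) =
        weight y l * b k - (if l = k then weight y l * (total_slack / \<mu> l) else 0)"
      by (auto simp: right_diff_distrib)
  qed
  also have "\<dots> = b k - weight y k * (total_slack / \<mu> k)"
    using finite_J k sum_weight[of y] by (simp add: sum_subtractf sum_distrib_right[symmetric])
  also have "\<dots> = a k \<bullet> y"
    unfolding weight_def using mu_pos[OF k] total_slack_pos by (simp add: field_simps)
  finally show "a k \<bullet> y = a k \<bullet> (\<Sum>l\<in>J. weight y l *\<^sub>R vertex l)" by simp
qed

lemma in_convex_hull_vertices:
  assumes y: "y \<in> cross_section" and "J' \<subseteq> J" and tight: "\<And>l. l \<in> J - J' \<Longrightarrow> a l \<bullet> y = b l"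
  shows "y \<in> convex hull (vertex ` J')"
proof -
  have weight_zero: "weight y l = 0" if "l \<in> J - J'" for l
    using tight[OF that] unfolding weight_def by simp
  have "y = (\<Sum>l\<in>J'. weight y l *\<^sub>R vertex l)"
    using barycentric_representation[of y] y weight_zero \<open>J' \<subseteq> J\<close> finite_J
    unfolding cross_section_def by (simp add: sum.mono_neutral_right[of J J'])
  also have "\<dots> \<in> convex hull (vertex ` J')"
  proof (rule convex_sum)
    show "finite J'" using finite_J \<open>J' \<subseteq> J\<close> finite_subset by blast
    show "(\<Sum>l\<in>J'. weight y l) = 1"
      using sum_weight[of y] sum.mono_neutral_left[OF finite_J \<open>J' \<subseteq> J\<close>, of "weight y"] weight_zero
      by simp
    show "0 \<le> weight y l" if "l \<in> J'" for l
      using weight_nonneg y \<open>J' \<subseteq> J\<close> that unfolding cross_section_def by blast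
  qed (auto intro: hull_inc)
  finally show ?thesis .
qed

lemma convex_feasible_set: "convex feasible_set"
proof -
  have "feasible_set = (\<Inter>h\<in>J. {x. a h \<bullet> x \<le> b h})" unfolding feasible_set_def by auto
  then show ?thesis by (simp add: convex_INT convex_halfspace_le)
qed

lemma cross_section_eq_convex_hull: "cross_section = convex hull (vertex ` J)"
proof
  show "cross_section \<subseteq> convex hull (vertex ` J)"
    using in_convex_hull_vertices[of _ J] by blast
  have "convex cross_section"
    unfolding cross_section_def normal_span_def
    by (rule convex_Int[OF subspace_imp_convex[OF subspace_span] convex_feasible_set])
  then show "convex hull (vertex ` J) \<subseteq> cross_section"
    using vertex_in_normal_span vertex_in_feasible_set
    by (intro hull_minimal) (auto simp: cross_section_def)
qed

lemma affine_independent_vertices: "\<not> affine_dependent (vertex ` J)"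
proof
  assume "affine_dependent (vertex ` J)"
  then obtain U where U: "sum U (vertex ` J) = 0" "\<exists>w\<in>vertex ` J. U w \<noteq> 0"
    "(\<Sum>w\<in>vertex ` J. U w *\<^sub>R w) = 0"
    using affine_dependent_explicit_finite[of "vertex ` J"] finite_J by auto
  then obtain k where k: "k \<in> J" and "U (vertex k) \<noteq> 0" by blast
  have "(\<Sum>w\<in>vertex ` J. U w * (b k - a k \<bullet> w)) =
      b k * sum U (vertex ` J) - a k \<bullet> (\<Sum>w\<in>vertex ` J. U w *\<^sub>R w)"
    by (simp add: algebra_simps sum_subtractf sum_distrib_left inner_sum_right)
  also have "\<dots> = 0" using U by simp
  also have "(\<Sum>w\<in>vertex ` J. U w * (b k - a k \<bullet> w)) = (\<Sum>l\<in>J. U (vertex l) * (b k - a k \<bullet> vertex l))"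
    by (rule sum.reindex[OF inj_on_vertex, unfolded comp_def])
  also have "\<dots> = (\<Sum>l\<in>J. if l = k then U (vertex k) * (total_slack / \<mu> k) else 0)"
    using slack_vertex k by (intro sum.cong) auto
  also have "\<dots> = U (vertex k) * (total_slack / \<mu> k)"
    using finite_J k by simp
  finally show False
    using \<open>U (vertex k) \<noteq> 0\<close> total_slack_pos mu_pos[OF k] by simp
qed

lemma simplex_cross_section: "int (card J - 1) simplex cross_section"
  unfolding cross_section_eq_convex_hull
  using affine_independent_vertices card_image[OF inj_on_vertex] card_J_ge_2
  by (intro simplex_convex_hull) (simp add: of_nat_diff)

lemma facet_of_cross_section:
  assumes "F facet_of cross_section"
  obtains l where "l \<in> J" "{x \<in> cross_section. a l \<bullet> x = b l} \<subseteq> F"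
proof -
  obtain u where "u \<in> vertex ` J" and F: "F = convex hull (vertex ` J - {u})"
    using assms facet_of_convex_hull_affine_independent[OF affine_independent_vertices]
    unfolding cross_section_eq_convex_hull by auto
  then obtain l where l: "l \<in> J" "u = vertex l" by blast
  have "vertex ` J - {u} = vertex ` (J - {l})"
    using inj_on_image_set_diff[OF inj_on_vertex, of J "{l}"] l by simp
  then have "{x \<in> cross_section. a l \<bullet> x = b l} \<subseteq> F"
    using in_convex_hull_vertices[of _ "J - {l}"] l(1) unfolding F by auto
  with l(1) show thesis by (rule that)
qed

lemma feasible_set_eq_vimage:
  assumes "range L = normal_span" "\<And>x y. y \<in> normal_span \<Longrightarrow> y \<bullet> L x = y \<bullet> x"
  shows "feasible_set = L -` cross_section"
  using assms a_in_normal_span unfolding cross_section_def feasible_set_def by auto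

lemma simplex_or_strip_feasible_set:
  "simplex_or_strip_over {{x \<in> feasible_set. a h \<bullet> x = b h} | h. h \<in> J} feasible_set"
proof (cases "card J - 1 = DIM('a)")
  case True
  then have "normal_span = UNIV"
    using dim_normal_span dim_eq_full unfolding normal_span_def by (metis span_span)
  then have eq: "cross_section = feasible_set" unfolding cross_section_def by simp
  have "\<exists>G\<in>{{x \<in> feasible_set. a h \<bullet> x = b h} | h. h \<in> J}. G \<subseteq> F"
    if F: "F facet_of feasible_set" for F
  proof -
    obtain l where "l \<in> J" "{x \<in> cross_section. a l \<bullet> x = b l} \<subseteq> F"
      using F unfolding eq[symmetric] by (rule facet_of_cross_section)
    then show ?thesis unfolding eq by blast
  qed
  then show ?thesis
    unfolding simplex_or_strip_over_def using simplex_cross_section True eq by auto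
next
  case False
  then have "card J - 1 < DIM('a)"
    using dim_normal_span dim_subset_UNIV[of normal_span] by simp
  have "subspace normal_span" unfolding normal_span_def by simp
  then obtain L where L: "linear L" "range L = normal_span"
    "\<And>x y. y \<in> normal_span \<Longrightarrow> y \<bullet> L x = y \<bullet> x"
    by (metis orthogonal_projection_exists)
  have "simplex_strip_data L (card J - 1) cross_section"
    unfolding simplex_strip_data_def
    using L(1,2) dim_normal_span card_J_ge_2 \<open>card J - 1 < DIM('a)\<close> simplex_cross_section
    by (auto simp: cross_section_def)
  moreover have S: "feasible_set = L -` cross_section"
    by (rule feasible_set_eq_vimage[OF L(2,3)])
  moreover have "\<exists>G\<in>{{x \<in> feasible_set. a h \<bullet> x = b h} | h. h \<in> J}. G \<subseteq> F"
    if F: "F \<in> strip_faces L cross_section" for F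
  proof -
    obtain G where G: "G facet_of cross_section" "F = L -` G"
      using F unfolding strip_faces_def by blast
    obtain l where l: "l \<in> J" "{x \<in> cross_section. a l \<bullet> x = b l} \<subseteq> G"
      using G(1) by (rule facet_of_cross_section)
    have "{x \<in> feasible_set. a l \<bullet> x = b l} \<subseteq> F"
      using S L(3) a_in_normal_span[OF l(1)] l(2) unfolding G(2) by auto
    with l(1) show ?thesis by blast
  qed
  ultimately show ?thesis
    unfolding simplex_or_strip_over_def
    by (intro disjI2 exI[of _ L] exI[of _ "card J - 1"] exI[of _ cross_section] conjI ballI)
qed

end

lemma exists_positive_circuit:
  fixes a :: "'i \<Rightarrow> 'a::euclidean_space"
  assumes "finite \<F>" "h0 \<in> \<F>" "a h0 \<noteq> 0" "- a h0 \<in> convex_cone hull (a ` \<F>)"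
  obtains J \<mu> where "J \<subseteq> \<F>" "positive_circuit a J h0 \<mu>"
proof -
  obtain l where l: "\<forall>h\<in>\<F>. 0 \<le> l h" "- a h0 = (\<Sum>h\<in>\<F>. l h *\<^sub>R a h)"
    using assms(1,4) by (rule convex_cone_hull_image_nonneg_sum)
  \<comment> \<open>Moving the h0-term to the left before applying Caratheodory keeps h0 out of
    the independent part.\<close>
  have "\<exists>I m. I \<subseteq> \<F> - {h0} \<and> inj_on a I \<and> independent (a ` I) \<and> (\<forall>h\<in>I. 0 < m h) \<and>
          (\<Sum>h\<in>I. m h *\<^sub>R a h) = (\<Sum>h\<in>\<F> - {h0}. l h *\<^sub>R a h)"
    using assms(1) l(1) by (intro conic_caratheodory) auto
  then obtain I m where I: "I \<subseteq> \<F> - {h0}" "inj_on a I" "independent (a ` I)" "\<forall>h\<in>I. 0 < m h"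
    and I_sum: "(\<Sum>h\<in>I. m h *\<^sub>R a h) = (\<Sum>h\<in>\<F> - {h0}. l h *\<^sub>R a h)"
    by blast
  define \<mu> where "\<mu> h = (if h = h0 then 1 + l h0 else m h)" for h
  have finite_I: "finite I" using I(1) assms(1) finite_subset by blast
  have "h0 \<notin> I" using I(1) by blast
  have "(\<Sum>h\<in>I. \<mu> h *\<^sub>R a h) = (\<Sum>h\<in>I. m h *\<^sub>R a h)"
    using \<open>h0 \<notin> I\<close> by (intro sum.cong) (auto simp: \<mu>_def)
  then have "(\<Sum>h\<in>insert h0 I. \<mu> h *\<^sub>R a h) = (1 + l h0) *\<^sub>R a h0 + (\<Sum>h\<in>I. m h *\<^sub>R a h)"
    using finite_I \<open>h0 \<notin> I\<close> by (simp add: \<mu>_def)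
  also have "\<dots> = (1 + l h0) *\<^sub>R a h0 + (- a h0 - l h0 *\<^sub>R a h0)"
    using I_sum l(2) sum.remove[OF assms(1,2), of "\<lambda>h. l h *\<^sub>R a h"] by simp
  finally have "(\<Sum>h\<in>insert h0 I. \<mu> h *\<^sub>R a h) = 0" by (simp add: algebra_simps)
  then have "positive_circuit a (insert h0 I) h0 \<mu>"
    using finite_I I(2-4) \<open>h0 \<notin> I\<close> l(1) assms(2,3)
    by unfold_locales (auto simp: \<mu>_def)
  moreover have "insert h0 I \<subseteq> \<F>" using I(1) assms(2) by blast
  ultimately show thesis by (intro that)
qed

section \<open>Bounded polyhedra\<close>

lemma bounded_polyhedron_no_recession:
  fixes a :: "'i \<Rightarrow> 'a::euclidean_space"
  assumes "bounded {x. \<forall>h\<in>\<F>. a h \<bullet> x \<le> b h}" "\<forall>h\<in>\<F>. a h \<bullet> x0 \<le> b h"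
    and "\<And>h. h \<in> \<F> \<Longrightarrow> a h \<bullet> w \<le> 0"
  shows "w = 0"
proof (rule ccontr)
  assume "w \<noteq> 0"
  let ?P = "{x. \<forall>h\<in>\<F>. a h \<bullet> x \<le> b h}"
  have ray: "x0 + t *\<^sub>R w \<in> ?P" if "0 \<le> t" for t
  proof -
    have "a h \<bullet> (x0 + t *\<^sub>R w) \<le> b h" if h: "h \<in> \<F>" for h
    proof -
      have "t * (a h \<bullet> w) \<le> 0" using \<open>0 \<le> t\<close> assms(3)[OF h] by (rule mult_nonneg_nonpos)
      moreover have "a h \<bullet> x0 \<le> b h" using assms(2) h by blast
      ultimately show ?thesis by (simp add: inner_add_right)
    qed
    then show ?thesis by simp
  qed
  obtain B where B: "\<forall>x\<in>?P. norm x \<le> B"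
    using assms(1) unfolding bounded_iff by blast
  define t where "t = (B + norm x0 + 1) / norm w"
  have "norm x0 \<le> B" using B assms(2) by blast
  then have "0 \<le> B + norm x0 + 1" using norm_ge_zero[of x0] by linarith
  then have "0 \<le> t" unfolding t_def by simp
  have "B + norm x0 + 1 = norm (t *\<^sub>R w)"
    unfolding t_def using \<open>w \<noteq> 0\<close> \<open>0 \<le> B + norm x0 + 1\<close> by simp
  also have "\<dots> = norm ((x0 + t *\<^sub>R w) - x0)" by simp
  also have "\<dots> \<le> norm (x0 + t *\<^sub>R w) + norm x0" by (rule norm_triangle_ineq4)
  also have "\<dots> \<le> B + norm x0" using B ray[OF \<open>0 \<le> t\<close>] by simp
  finally show False by simp
qed

lemma uminus_normal_in_convex_cone_hull:
  fixes a :: "'i \<Rightarrow> 'a::euclidean_space"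
  assumes "finite \<F>" "h0 \<in> \<F>" "bounded {x. \<forall>h\<in>\<F>. a h \<bullet> x \<le> b h}" "\<forall>h\<in>\<F>. a h \<bullet> x0 \<le> b h"
  shows "- a h0 \<in> convex_cone hull (a ` \<F>)"
proof (rule ccontr)
  let ?Q = "convex_cone hull (a ` \<F>)"
  assume "- a h0 \<notin> ?Q"
  moreover have "closed ?Q" using assms(1) by (simp add: closed_convex_cone_hull)
  ultimately obtain w \<beta> where w: "w \<bullet> (- a h0) < \<beta>" "\<forall>x\<in>?Q. \<beta> < w \<bullet> x"
    using separating_hyperplane_closed_point[OF convex_convex_cone_hull] by blast
  have "\<beta> < w \<bullet> 0" using w(2) convex_cone_hull_contains_0 by blast
  then have "\<beta> < 0" by simp
  have "a h \<bullet> (- w) \<le> 0" if h: "h \<in> \<F>" for h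
  proof (rule ccontr)
    assume "\<not> a h \<bullet> (- w) \<le> 0"
    then have neg: "w \<bullet> a h < 0" by (simp add: inner_commute)
    have "(\<beta> / (w \<bullet> a h)) *\<^sub>R a h \<in> ?Q"
      using \<open>\<beta> < 0\<close> neg h by (intro convex_cone_hull_mul hull_inc) (auto simp: divide_nonpos_neg)
    then have "\<beta> < w \<bullet> ((\<beta> / (w \<bullet> a h)) *\<^sub>R a h)" using w(2) by blast
    then show False using neg by simp
  qed
  then have "- w = 0" by (rule bounded_polyhedron_no_recession[OF assms(3,4)])
  then show False using w(1) \<open>\<beta> < 0\<close> by simp
qed

lemma full_dim_polyhedron_facet_inequalities:
  fixes K :: "'a::euclidean_space set"
  assumes "polyhedron K" "aff_dim K = int DIM('a)"
  obtains \<F> :: "'a set set" and a b x0 where "finite \<F>" "K = {x. \<forall>h\<in>\<F>. a h \<bullet> x \<le> b h}"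
    "\<forall>h\<in>\<F>. a h \<noteq> 0" "\<forall>h\<in>\<F>. K \<inter> {x. a h \<bullet> x = b h} facet_of K"
    "\<forall>h\<in>\<F>. a h \<bullet> x0 < b h"
proof -
  obtain \<F> where finite: "finite \<F>" and seq: "K = affine hull K \<inter> \<Inter>\<F>"
    and halfspaces: "\<forall>h\<in>\<F>. \<exists>a b. a \<noteq> 0 \<and> h = {x. a \<bullet> x \<le> b}"
    and minimal: "\<forall>\<F>'. \<F>' \<subset> \<F> \<longrightarrow> K \<subset> affine hull K \<inter> \<Inter>\<F>'"
    using assms(1) polyhedron_Int_affine_minimal by metis
  obtain a b where ab: "\<And>h. h \<in> \<F> \<Longrightarrow> a h \<noteq> 0 \<and> h = {x. a h \<bullet> x \<le> b h}"
    using halfspaces by metis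
  have mem: "x \<in> h \<longleftrightarrow> a h \<bullet> x \<le> b h" if "h \<in> \<F>" for h x
    using conjunct2[OF ab[OF that]] by (metis mem_Collect_eq)
  have "K = \<Inter>\<F>" using seq assms(2) by (simp add: aff_dim_eq_full)
  then have K_eq: "K = {x. \<forall>h\<in>\<F>. a h \<bullet> x \<le> b h}" by (auto simp: mem)
  have facets: "K \<inter> {x. a h \<bullet> x = b h} facet_of K" if h: "h \<in> \<F>" for h
    using facet_of_polyhedron_explicit[OF finite seq ab] minimal h by blast
  have "K \<noteq> {}" using assms(2) by auto
  then have "rel_interior K \<noteq> {}"
    using polyhedron_imp_convex[OF assms(1)] rel_interior_eq_empty by blast
  then obtain x0 where x0: "x0 \<in> interior K"
    using interior_rel_interior_gen[of K] assms(2) by auto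
  have strict: "a h \<bullet> x0 < b h" if h: "h \<in> \<F>" for h
  proof -
    have "interior K \<subseteq> interior {x. a h \<bullet> x \<le> b h}"
      using K_eq h by (intro interior_mono) blast
    then show ?thesis using x0 interior_halfspace_le[OF conjunct1[OF ab[OF h]]] by blast
  qed
  show thesis by (rule that[OF finite K_eq]) (use ab facets strict in auto)
qed

lemma exists_simplex_or_strip_piece:
  fixes a :: "'i \<Rightarrow> 'a::euclidean_space"
  assumes "finite \<F>" "K = {x. \<forall>h\<in>\<F>. a h \<bullet> x \<le> b h}" "bounded K"
    and "\<forall>h\<in>\<F>. K \<inter> {x. a h \<bullet> x = b h} facet_of K"
    and "\<forall>h\<in>\<F>. a h \<bullet> x0 < b h" and "h0 \<in> \<F>" "a h0 \<noteq> 0"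
  obtains S where "K \<subseteq> S" "S \<subseteq> {x. a h0 \<bullet> x \<le> b h0}" "simplex_or_strip_over {G. G facet_of K} S"
proof -
  have "\<forall>h\<in>\<F>. a h \<bullet> x0 \<le> b h" using assms(5) by (simp add: less_imp_le)
  then have "- a h0 \<in> convex_cone hull (a ` \<F>)"
    by (rule uminus_normal_in_convex_cone_hull[OF assms(1,6) assms(3)[unfolded assms(2)]])
  with assms(1,6,7)
  obtain J \<mu> where J: "J \<subseteq> \<F>" and circuit: "positive_circuit a J h0 \<mu>"
    by (rule exists_positive_circuit)
  interpret circuit_polyhedron a J h0 \<mu> b x0
    using circuit J assms(5)
    by (intro circuit_polyhedron.intro circuit_polyhedron_axioms.intro) auto
  have "K \<subseteq> feasible_set" using J unfolding assms(2) feasible_set_def by blast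
  have "\<exists>G'\<in>{G. G facet_of K}. G' \<subseteq> G"
    if G: "G \<in> {{x \<in> feasible_set. a h \<bullet> x = b h} | h. h \<in> J}" for G
  proof -
    obtain h where h: "h \<in> J" "G = {x \<in> feasible_set. a h \<bullet> x = b h}" using G by blast
    then have "K \<inter> {x. a h \<bullet> x = b h} facet_of K" using assms(4) J by blast
    moreover have "K \<inter> {x. a h \<bullet> x = b h} \<subseteq> G" using h(2) \<open>K \<subseteq> feasible_set\<close> by blast
    ultimately show ?thesis by blast
  qed
  then have "simplex_or_strip_over {G. G facet_of K} feasible_set"
    by (rule simplex_or_strip_over_mono[OF simplex_or_strip_feasible_set])
  moreover have "feasible_set \<subseteq> {x. a h0 \<bullet> x \<le> b h0}"
    using h0_in_J unfolding feasible_set_def by blast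
  ultimately show thesis using \<open>K \<subseteq> feasible_set\<close> by (intro that)
qed

theorem theorem4p5:
  fixes K :: "'a::euclidean_space set"
  assumes "polytope K" and "aff_dim K = int DIM('a)"
  shows "\<exists>\<S>. finite \<S> \<and> K = \<Inter>\<S> \<and>
           (\<forall>S\<in>\<S>.
              ((int DIM('a)) simplex S \<and>
                 (\<forall>F. F facet_of S \<longrightarrow> (\<exists>G. G facet_of K \<and> G \<subseteq> F)))
            \<or> (\<exists>L j A. simplex_strip_data L j A \<and> S = L -` A \<and>
                 (\<forall>F\<in>strip_faces L A. \<exists>G. G facet_of K \<and> G \<subseteq> F)))"
proof -
  obtain \<F> :: "'a set set" and a b x0
    where finite: "finite \<F>" and K_eq: "K = {x. \<forall>h\<in>\<F>. a h \<bullet> x \<le> b h}"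
    and nonzero: "\<forall>h\<in>\<F>. a h \<noteq> 0"
    and facets: "\<forall>h\<in>\<F>. K \<inter> {x. a h \<bullet> x = b h} facet_of K"
    and interior: "\<forall>h\<in>\<F>. a h \<bullet> x0 < b h"
    using polytope_imp_polyhedron[OF assms(1)] assms(2)
    by (rule full_dim_polyhedron_facet_inequalities)
  have "\<exists>S. K \<subseteq> S \<and> S \<subseteq> {x. a h \<bullet> x \<le> b h} \<and> simplex_or_strip_over {G. G facet_of K} S"
    if "h \<in> \<F>" for h
    using finite K_eq polytope_imp_bounded[OF assms(1)] facets interior
      that nonzero[rule_format, OF that]
    by (rule exists_simplex_or_strip_piece) blast
  then obtain S where S: "\<And>h. h \<in> \<F> \<Longrightarrow>
      K \<subseteq> S h \<and> S h \<subseteq> {x. a h \<bullet> x \<le> b h} \<and> simplex_or_strip_over {G. G facet_of K} (S h)"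
    by metis
  have "K = \<Inter>(S ` \<F>)"
  proof
    show "K \<subseteq> \<Inter>(S ` \<F>)" using S by blast
    show "\<Inter>(S ` \<F>) \<subseteq> K" unfolding K_eq using S by blast
  qed
  with finite S show ?thesis
    by (intro exI[of _ "S ` \<F>"]) (auto simp: simplex_or_strip_over_def)
qed

end
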